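(* Let $(X,d)$ be a Cantor space and let $f\in\mathcal{H}(X)$ be equicontinuous. Then $f$ is topologically stable if and only if $f$ has the strict periodic shadowing property.
   Context: A Cantor space is a compact metric space without isolated points that is totally disconnected. $\mathcal{H}(X)$, $d_{C^0}$, $D$: set of homeomorphisms, $d_{C^0}(f,g)=\sup_x d(f(x),g(x))$, $D(f,g)=\max\{d_{C^0}(f,g),d_{C^0}(f^{-1},g^{-1})\}$. Equicontinuous: for every $\epsilon>0$ there is $\delta>0$ with $d(x,y)\le\delta\Rightarrow\sup_{i\in\mathbb{Z}}d(f^i(x),f^i(y))\le\epsilon$. Strict periodic shadowing property: for every $\epsilon>0$ there is $\delta>0$ such that for every $(x_i)_{i=0}^m$, $m\ge1$, with $d(f(x_i),x_{i+1})\le\delta$ and $x_0=x_m$, there is $p$ with $f^m(p)=p$ and $d(x_i,f^i(p))\le\epsilon$ for $0\le i\le m$. Topologically stable: for every $\epsilon>0$ there is $\delta>0$ such that every $g\in\mathcal{H}(X)$ with $D(f,g)<\delta$ admits a continuous $h:X\to X$ with $d_{C^0}(h,\mathrm{id}_X)<\epsilon$ and $h\circ g=f\circ h$. *)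

theory Defs
  imports "HOL-Analysis.Analysis"
begin

text \<open>The whole type 'a plays the role of the metric space X.\<close>

definition cantor_space :: "'a::metric_space itself \<Rightarrow> bool" where
  "cantor_space _ \<longleftrightarrow> compact (UNIV :: 'a set)
     \<and> (\<forall>x::'a. x islimpt UNIV)
     \<and> (\<forall>S::'a set. connected S \<longrightarrow> (\<exists>a. S \<subseteq> {a}))"

definition is_homeo :: "('a::metric_space \<Rightarrow> 'a) \<Rightarrow> bool" where
  "is_homeo f \<longleftrightarrow> (\<exists>g. homeomorphism UNIV UNIV f g)"

definition dC0 :: "('a::metric_space \<Rightarrow> 'a) \<Rightarrow> ('a \<Rightarrow> 'a) \<Rightarrow> real" where
  "dC0 f g = (SUP x. dist (f x) (g x))"

definition Dhom :: "('a::metric_space \<Rightarrow> 'a) \<Rightarrow> ('a \<Rightarrow> 'a) \<Rightarrow> real" where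
  "Dhom f g = max (dC0 f g) (dC0 (inv f) (inv g))"

definition zpow :: "('a \<Rightarrow> 'a) \<Rightarrow> int \<Rightarrow> 'a \<Rightarrow> 'a" where
  "zpow f i = (if 0 \<le> i then f ^^ nat i else inv f ^^ nat (- i))"

definition equicontinuous_homeo :: "('a::metric_space \<Rightarrow> 'a) \<Rightarrow> bool" where
  "equicontinuous_homeo f \<longleftrightarrow> (\<forall>e>0. \<exists>d>0. \<forall>x y. dist x y \<le> d \<longrightarrow>
      (SUP i::int. dist (zpow f i x) (zpow f i y)) \<le> e)"

definition strict_periodic_shadowing :: "('a::metric_space \<Rightarrow> 'a) \<Rightarrow> bool" where
  "strict_periodic_shadowing f \<longleftrightarrow> (\<forall>e>0. \<exists>d>0. \<forall>(xs::nat \<Rightarrow> 'a) m. m \<ge> 1 \<longrightarrow>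
      (\<forall>i<m. dist (f (xs i)) (xs (Suc i)) \<le> d) \<longrightarrow> xs 0 = xs m \<longrightarrow>
      (\<exists>p. (f ^^ m) p = p \<and> (\<forall>i\<le>m. dist (xs i) ((f ^^ i) p) \<le> e)))"

definition topologically_stable :: "('a::metric_space \<Rightarrow> 'a) \<Rightarrow> bool" where
  "topologically_stable f \<longleftrightarrow> (\<forall>e>0. \<exists>d>0. \<forall>g. is_homeo g \<longrightarrow> Dhom f g < d \<longrightarrow>
      (\<exists>h. continuous_on UNIV h \<and> dC0 h id < e \<and> h \<circ> g = f \<circ> h))"

end

theory Submission
  imports Defs
begin

text \<open>Equicontinuity on a compact totally disconnected space gives, for every \<open>\<eta> > 0\<close>, an
  equivalence relation with open classes of diameter \<open>< \<eta>\<close> that is preserved by \<open>f\<close> and its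
  inverse: two points are equivalent when their two-sided orbits never get separated by a finite
  clopen cover of small mesh. The finitely many classes are permuted by \<open>f\<close>, so the class of
  every point returns to itself after a least period.

  If \<open>f\<close> has strict periodic shadowing, the class orbit of each representative is shadowed by a
  periodic orbit of the same period. Sending every point to the matching point of that periodic
  orbit gives a locally constant \<open>h\<close> close to the identity with \<open>h \<circ> f = f \<circ> h\<close>; since a
  homeomorphism \<open>g\<close> close to \<open>f\<close> maps every point into the class of its \<open>f\<close>-image, also
  \<open>h \<circ> g = f \<circ> h\<close>.

  Conversely, a closed pseudo-orbit with small jumps stays in the classes of the true orbit of its
  initial point \<open>x\<close>, so its length is a multiple of the period of \<open>x\<close>. Following \<open>f\<close> by the
  inverse of \<open>f ^^ period x\<close> on the class of \<open>x\<close> gives a homeomorphism \<open>g\<close> near \<open>f\<close> for which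
  \<open>x\<close> is periodic, and the semiconjugacy from topological stability carries this \<open>g\<close>-orbit to a
  shadowing periodic \<open>f\<close>-orbit.\<close>

lemma clopen_nbhd_in_ball:
  fixes x :: "'a::metric_space"
  assumes "compact (UNIV::'a set)" and "\<forall>S::'a set. connected S \<longrightarrow> (\<exists>a. S \<subseteq> {a})"
    and "r > 0"
  shows "\<exists>U. open U \<and> closed U \<and> x \<in> U \<and> U \<subseteq> ball x r"
proof -
  have "connected_component_of_set euclidean x = {x}"
  proof (intro set_eqI iffI)
    fix y assume "y \<in> connected_component_of_set euclidean x"
    then obtain T where "connected T" "x \<in> T" "y \<in> T"
      by (auto simp: connected_component_of_def connectedin_iff_connected)
    with assms(2)[rule_format, of T] show "y \<in> {x}" by blast
  qed (simp add: connected_component_of_refl)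
  then have component: "{x} \<in> connected_components_of (euclidean::'a topology)"
    unfolding connected_components_of_def by auto
  have "locally_compact_space (euclidean::'a topology)"
    using assms(1) by (intro compact_imp_locally_compact_space) (simp add: compact_space_def)
  then obtain U V where "open U" "open V" "disjnt U V" "U \<union> V = UNIV" "x \<in> U" "U \<subseteq> ball x r"
    using wilder_locally_compact_component_thm[OF _ Hausdorff_space_euclidean component,
        of "ball x r"] assms(3) by auto
  moreover have "U = - V"
    using \<open>disjnt U V\<close> \<open>U \<union> V = UNIV\<close> by (auto simp: disjnt_def)
  ultimately show ?thesis
    by (auto simp: closed_def)
qed

lemma clopen_partition_with_Lebesgue_number:
  fixes eta :: real
  assumes "compact (UNIV::'a::metric_space set)" and "\<forall>S::'a set. connected S \<longrightarrow> (\<exists>a. S \<subseteq> {a})"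
    and "eta > 0"
  obtains E :: "'a::metric_space \<Rightarrow> 'a \<Rightarrow> bool" and lam :: real
  where "equivp E" "lam > 0" "\<And>x y. dist x y < lam \<Longrightarrow> E x y" "\<And>x y. E x y \<Longrightarrow> dist x y < eta"
proof -
  obtain U :: "'a \<Rightarrow> 'a set"
    where U: "\<And>x. open (U x) \<and> closed (U x) \<and> x \<in> U x \<and> U x \<subseteq> ball x (eta/2)"
    using clopen_nbhd_in_ball[OF assms(1,2)] assms(3) by (metis half_gt_zero)
  obtain T where "finite T" and T: "UNIV \<subseteq> \<Union> (U ` T)"
  proof (rule compactE_image[OF assms(1), of UNIV U])
    show "open (U x)" for x using U by blast
    show "UNIV \<subseteq> (\<Union>x\<in>UNIV. U x)" using U by blast
  qed (use that in auto)
  define E where "E a b \<longleftrightarrow> (\<forall>t\<in>T. a \<in> U t \<longleftrightarrow> b \<in> U t)" for a b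
  have "equivp E"
    by (intro equivpI reflpI sympI transpI) (auto simp: E_def)
  have E_small: "dist a b < eta" if "E a b" for a b
  proof -
    obtain t where "t \<in> T" "a \<in> U t" using T by auto
    moreover from this have "b \<in> U t" using that unfolding E_def by blast
    ultimately have "dist t a < eta/2" "dist t b < eta/2"
      using U[of t] by auto
    then show ?thesis
      using dist_triangle3[of a b t] by linarith
  qed
  have "{b. E a b} = (\<Inter>t\<in>T. if a \<in> U t then U t else - U t)" for a
    unfolding E_def by auto
  moreover have "open (\<Inter>t\<in>T. if a \<in> U t then U t else - U t)" for a
    using \<open>finite T\<close> U by (intro open_INT) (simp_all add: open_Compl)
  ultimately have open_class: "open {b. E a b}" for a
    by simp
  obtain lam where "lam > 0" and lam: "\<And>x. \<exists>G\<in>range (\<lambda>a. {b. E a b}). ball x lam \<subseteq> G"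
  proof (rule Heine_Borel_lemma[OF assms(1), of "range (\<lambda>a. {b. E a b})"])
    show "UNIV \<subseteq> \<Union> (range (\<lambda>a. {b. E a b}))"
      using equivp_reflp[OF \<open>equivp E\<close>] by blast
  qed (use open_class that in auto)
  have "E x y" if "dist x y < lam" for x y
  proof -
    obtain a where a: "ball x lam \<subseteq> {b. E a b}" using lam by auto
    have "x \<in> ball x lam" "y \<in> ball x lam" using that \<open>lam > 0\<close> by (auto simp: dist_commute)
    then have "E a x" "E a y" using a by blast+
    then show ?thesis unfolding E_def by auto
  qed
  with \<open>equivp E\<close> \<open>lam > 0\<close> E_small that show ?thesis by blast
qed

lemma dist_le_SUP_dist:
  fixes F G :: "'i \<Rightarrow> 'a::metric_space"
  assumes "bounded (UNIV::'a set)"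
  shows "dist (F i) (G i) \<le> (SUP j. dist (F j) (G j))"
  by (intro cSUP_upper bdd_aboveI2[of _ _ "diameter (UNIV::'a set)"])
    (auto intro: diameter_bounded_bound[OF assms])

lemma dist_le_dC0:
  fixes F G :: "'a::metric_space \<Rightarrow> 'a"
  assumes "bounded (UNIV::'a set)"
  shows "dist (F x) (G x) \<le> dC0 F G"
  unfolding dC0_def using assms by (rule dist_le_SUP_dist)

lemma dC0_le: "(\<And>x. dist (F x) (G x) \<le> c) \<Longrightarrow> dC0 F G \<le> c"
  unfolding dC0_def by (rule cSUP_least) auto

lemma funpow_inverse_cancel:
  fixes f g :: "'a \<Rightarrow> 'a"
  assumes "\<And>x. g (f x) = x"
  shows "(g ^^ n) ((f ^^ n) x) = x"
proof (induction n)
  case (Suc n)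
  have "(g ^^ Suc n) ((f ^^ Suc n) x) = (g ^^ n) (g (f ((f ^^ n) x)))"
    by (simp only: funpow_Suc_right[of _ g] funpow.simps(2)[of _ f] comp_apply)
  with Suc.IH show ?case by (simp add: assms)
qed simp

lemma funpow_semiconj: "h \<circ> g = f \<circ> h \<Longrightarrow> h ((g ^^ n) x) = (f ^^ n) (h x)"
  by (induction n) (simp_all, metis comp_apply)

lemma funpow_preserves_rel:
  "(\<And>x y. R x y \<Longrightarrow> R (f x) (f y)) \<Longrightarrow> R x y \<Longrightarrow> R ((f ^^ n) x) ((f ^^ n) y)"
  by (induction n) auto

lemma continuous_on_funpow:
  fixes f :: "'a::topological_space \<Rightarrow> 'a"
  assumes "continuous_on UNIV f"
  shows "continuous_on UNIV (f ^^ n)"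
proof (induction n)
  case (Suc n)
  then have "continuous_on UNIV (f \<circ> f ^^ n)"
    by (intro continuous_on_compose) (auto intro: continuous_on_subset assms)
  then show ?case by simp
qed (simp add: continuous_on_id)

lemma inv_eq_if_homeomorphism: "homeomorphism UNIV UNIV f g \<Longrightarrow> inv f = g"
  by (rule inv_unique_comp) (auto simp: homeomorphism_def fun_eq_iff)

locale invariant_partition =
  fixes f f' :: "'a::metric_space \<Rightarrow> 'a" and R :: "'a \<Rightarrow> 'a \<Rightarrow> bool" and lam eta :: real
  assumes homeo: "homeomorphism UNIV UNIV f f'"
    and compact: "compact (UNIV::'a set)"
    and equiv: "equivp R"
    and R_f: "R x y \<Longrightarrow> R (f x) (f y)"
    and R_f': "R x y \<Longrightarrow> R (f' x) (f' y)"
    and lam_pos: "lam > 0"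
    and R_if_near: "dist x y < lam \<Longrightarrow> R x y"
    and dist_less_if_R: "R x y \<Longrightarrow> dist x y < eta"
begin

lemma R_refl: "R x x"
  using equiv by (simp add: equivp_reflp)

lemma R_sym: "R x y \<Longrightarrow> R y x"
  using equiv by (metis equivp_symp)

lemma R_trans: "R x y \<Longrightarrow> R y z \<Longrightarrow> R x z"
  using equiv by (metis equivp_transp)

lemma f'_f [simp]: "f' (f x) = x" and f_f' [simp]: "f (f' x) = x"
  using homeo by (simp_all add: homeomorphism_def)

lemma R_funpow: "R x y \<Longrightarrow> R ((f ^^ n) x) ((f ^^ n) y)"
  by (rule funpow_preserves_rel[of R f, OF R_f])

lemma R_funpow': "R x y \<Longrightarrow> R ((f' ^^ n) x) ((f' ^^ n) y)"
  by (rule funpow_preserves_rel[of R f', OF R_f'])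

lemma R_funpow_cancel: "R ((f ^^ n) x) ((f ^^ n) y) \<Longrightarrow> R x y"
  using R_funpow'[of "(f ^^ n) x" "(f ^^ n) y" n] by (simp add: funpow_inverse_cancel)

lemma open_class: "open {y. R x y}"
  unfolding open_dist
proof (intro ballI exI conjI allI impI)
  fix y z assume "y \<in> {y. R x y}" "dist z y < lam"
  then show "z \<in> {y. R x y}" using R_if_near R_sym R_trans by blast
qed (rule lam_pos)

lemma closed_class: "closed {y. R x y}"
  unfolding closed_def open_dist
proof (intro ballI exI conjI allI impI)
  fix y z assume "y \<in> - {y. R x y}" "dist z y < lam"
  then show "z \<in> - {y. R x y}" using R_if_near R_trans by blast
qed (rule lam_pos)

lemma continuous_on_if_R_invariant:
  fixes h :: "'a \<Rightarrow> 'b::metric_space"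
  assumes "\<And>x y. R x y \<Longrightarrow> h x = h y"
  shows "continuous_on UNIV h"
  unfolding continuous_on_iff
proof (intro ballI allI impI exI[of _ lam] conjI)
  fix x y :: 'a and e :: real assume "e > 0" "dist y x < lam"
  then show "dist (h y) (h x) < e" using assms[OF R_if_near] by simp
qed (rule lam_pos)

lemma R_funpow_if_R_close:
  assumes "\<And>y. R (g y) (f y)"
  shows "R ((g ^^ n) x) ((f ^^ n) x)"
proof (induction n)
  case (Suc n)
  have "R (g ((g ^^ n) x)) (f ((g ^^ n) x))" by (rule assms)
  moreover have "R (f ((g ^^ n) x)) (f ((f ^^ n) x))" using Suc.IH by (rule R_f)
  ultimately show ?case using R_trans by simp
qed (simp add: R_refl)

text \<open>Compactness and openness of the classes leave only finitely many classes, so every orbit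
  returns to the class it started in.\<close>
lemma class_recurrent: "\<exists>n>0. R ((f ^^ n) x) x"
proof -
  obtain K where "finite K" and K: "UNIV \<subseteq> (\<Union>k\<in>K. {y. R k y})"
  proof (rule compactE_image[OF compact, of UNIV "\<lambda>k. {y. R k y}"])
    show "UNIV \<subseteq> (\<Union>k\<in>UNIV. {y. R k y})" using R_refl by blast
  qed (use open_class that in auto)
  define cls where "cls a = {y. R ((f ^^ a) x) y}" for a
  have "cls a \<in> (\<lambda>k. {y. R k y}) ` K" for a
  proof -
    obtain k where "k \<in> K" "R k ((f ^^ a) x)" using K by blast
    then have "cls a = {y. R k y}" unfolding cls_def using R_sym R_trans by blast
    with \<open>k \<in> K\<close> show ?thesis by blast
  qed
  then have "range cls \<subseteq> (\<lambda>k. {y. R k y}) ` K" by blast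
  then have "finite (range cls)"
    using finite_subset finite_imageI[OF \<open>finite K\<close>] by blast
  then have "\<not> inj cls"
    using finite_imageD infinite_UNIV_nat by blast
  then obtain a b where "a \<noteq> b" "cls a = cls b"
    unfolding inj_def by blast
  have "(f ^^ b) x \<in> cls b" unfolding cls_def by (simp add: R_refl)
  then have "(f ^^ b) x \<in> cls a" using \<open>cls a = cls b\<close> by simp
  then have R_ab: "R ((f ^^ a) x) ((f ^^ b) x)" unfolding cls_def by simp
  have "\<exists>i j. i < j \<and> R ((f ^^ i) x) ((f ^^ j) x)"
  proof (cases "a < b")
    case False
    with \<open>a \<noteq> b\<close> have "b < a" by simp
    with R_sym[OF R_ab] show ?thesis by blast
  qed (use R_ab in blast)
  then obtain i j where "i < j" and R_ij: "R ((f ^^ i) x) ((f ^^ j) x)" by blast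
  have "(f ^^ j) x = (f ^^ i) ((f ^^ (j - i)) x)"
    using \<open>i < j\<close> by (metis funpow_add comp_apply le_add_diff_inverse less_imp_le)
  then have "R x ((f ^^ (j - i)) x)"
    using R_funpow_cancel[of i x "(f ^^ (j - i)) x"] R_ij by simp
  moreover have "0 < j - i" using \<open>i < j\<close> by simp
  ultimately show ?thesis using R_sym by blast
qed

definition period :: "'a \<Rightarrow> nat" where
  "period x = (LEAST n. 0 < n \<and> R ((f ^^ n) x) x)"

lemma period_pos: "0 < period x" and R_funpow_period: "R ((f ^^ period x) x) x"
  using LeastI_ex[OF class_recurrent[of x]] unfolding period_def by auto

lemma not_R_funpow_below_period: "0 < k \<Longrightarrow> k < period x \<Longrightarrow> \<not> R ((f ^^ k) x) x"
  unfolding period_def using not_less_Least by blast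

lemma R_funpow_mod_period: "R ((f ^^ k) x) ((f ^^ (k mod period x)) x)"
proof -
  have multiple: "R ((f ^^ (q * period x)) x) x" for q
  proof (induction q)
    case (Suc q)
    have "(f ^^ (Suc q * period x)) x = (f ^^ (q * period x)) ((f ^^ period x) x)"
      by (simp only: mult_Suc add.commute[of "period x"] funpow_add comp_apply)
    then show ?case
      using R_funpow[OF R_funpow_period, of "q * period x" x] Suc.IH R_trans by metis
  qed (simp add: R_refl)
  have "(f ^^ k) x = (f ^^ (k mod period x)) ((f ^^ (k div period x * period x)) x)"
    by (metis comp_apply funpow_add mod_div_mult_eq)
  then show ?thesis using R_funpow[OF multiple] by metis
qed

lemma mod_period_eq_if_R:
  assumes "R ((f ^^ a) x) ((f ^^ b) x)"
  shows "a mod period x = b mod period x"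
proof -
  have below: "i = j" if "i \<le> j" "j < period x" "R ((f ^^ i) x) ((f ^^ j) x)" for i j
  proof (rule ccontr)
    assume "i \<noteq> j"
    have "(f ^^ j) x = (f ^^ i) ((f ^^ (j - i)) x)"
      using \<open>i \<le> j\<close> by (metis funpow_add comp_apply le_add_diff_inverse)
    then have "R ((f ^^ (j - i)) x) x"
      using that(3) R_funpow_cancel R_sym by metis
    moreover have "0 < j - i" "j - i < period x" using that \<open>i \<noteq> j\<close> by auto
    ultimately show False using not_R_funpow_below_period by blast
  qed
  have "R ((f ^^ (a mod period x)) x) ((f ^^ (b mod period x)) x)"
    using assms R_funpow_mod_period R_sym R_trans by meson
  moreover have "a mod period x < period x" "b mod period x < period x"
    using period_pos by auto
  ultimately show ?thesis
    using below R_sym by (metis nat_le_linear)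
qed

lemma period_dvd_if_R: "R ((f ^^ k) x) x \<Longrightarrow> period x dvd k"
  using mod_period_eq_if_R[of k x 0] by (simp add: mod_eq_0_iff_dvd)

lemma eta_pos: "0 < eta"
  using dist_less_if_R[OF R_refl] by simp

definition same_orbit :: "'a \<Rightarrow> 'a \<Rightarrow> bool" where
  "same_orbit x y \<longleftrightarrow> (\<exists>j. R ((f ^^ j) x) y)"

lemma same_orbit_if_R: "R x y \<Longrightarrow> same_orbit x y"
  unfolding same_orbit_def by (metis funpow_0)

lemma same_orbit_f: "same_orbit x (f x)"
  unfolding same_orbit_def by (rule exI[of _ 1]) (simp add: R_refl)

lemma same_orbit_sym: "same_orbit x y \<Longrightarrow> same_orbit y x"
proof -
  assume "same_orbit x y"
  then obtain j where j: "R ((f ^^ j) x) y" unfolding same_orbit_def by blast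
  have "j \<le> j * period x" using period_pos[of x] by simp
  then have "(f ^^ (j * period x)) x = (f ^^ (j * period x - j)) ((f ^^ j) x)"
    by (metis funpow_add comp_apply le_add_diff_inverse2)
  then have "R ((f ^^ (j * period x - j)) y) ((f ^^ (j * period x)) x)"
    using R_funpow[OF R_sym[OF j]] by metis
  moreover have "R ((f ^^ (j * period x)) x) x"
    using R_funpow_mod_period[of "j * period x" x] by simp
  ultimately show ?thesis unfolding same_orbit_def using R_trans by blast
qed

lemma same_orbit_trans: "same_orbit x y \<Longrightarrow> same_orbit y z \<Longrightarrow> same_orbit x z"
proof -
  assume "same_orbit x y" "same_orbit y z"
  then obtain j k where j: "R ((f ^^ j) x) y" and k: "R ((f ^^ k) y) z"
    unfolding same_orbit_def by blast
  have "R ((f ^^ (k + j)) x) ((f ^^ k) y)"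
    unfolding funpow_add comp_apply using R_funpow[OF j] .
  then show ?thesis unfolding same_orbit_def using k R_trans by blast
qed

lemma orbit_coordinates:
  obtains rep :: "'a \<Rightarrow> 'a" and idx :: "'a \<Rightarrow> nat" where
    "\<And>x. R ((f ^^ idx x) (rep x)) x"
    "\<And>x. idx x < period (rep x)"
    "\<And>x y. R x y \<Longrightarrow> rep x = rep y \<and> idx x = idx y"
    "\<And>x. rep (f x) = rep x \<and> idx (f x) = Suc (idx x) mod period (rep x)"
proof -
  define rep where "rep x = (SOME y. same_orbit y x)" for x
  define idx where "idx x = (LEAST j. R ((f ^^ j) (rep x)) x)" for x
  have rep_same_orbit: "same_orbit (rep x) x" for x
    unfolding rep_def by (rule someI[of _ x]) (simp add: same_orbit_if_R R_refl)
  have rep_eq: "rep x = rep y" if "same_orbit x y" for x y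
  proof -
    have "(\<lambda>z. same_orbit z x) = (\<lambda>z. same_orbit z y)"
      using that same_orbit_sym same_orbit_trans by (intro ext iffI) blast+
    then show ?thesis unfolding rep_def by simp
  qed
  have idx_R: "R ((f ^^ idx x) (rep x)) x" for x
    unfolding idx_def using rep_same_orbit[of x] unfolding same_orbit_def by (rule LeastI_ex)
  have idx_less: "idx x < period (rep x)" for x
  proof -
    have "R ((f ^^ (idx x mod period (rep x))) (rep x)) x"
      using R_funpow_mod_period idx_R R_sym R_trans by blast
    then have "idx x \<le> idx x mod period (rep x)" unfolding idx_def by (rule Least_le)
    then show ?thesis using period_pos[of "rep x"] by (meson le_less_trans mod_less_divisor)
  qed
  have R_coords: "rep x = rep y \<and> idx x = idx y" if "R x y" for x y
  proof
    show rep: "rep x = rep y" using rep_eq same_orbit_if_R that by blast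
    have "(\<lambda>j. R ((f ^^ j) (rep y)) x) = (\<lambda>j. R ((f ^^ j) (rep y)) y)"
      using that R_sym R_trans by (intro ext iffI) blast+
    then show "idx x = idx y" unfolding idx_def rep by simp
  qed
  have f_coords: "rep (f x) = rep x \<and> idx (f x) = Suc (idx x) mod period (rep x)" for x
  proof
    show rep: "rep (f x) = rep x" using rep_eq[OF same_orbit_f] by simp
    have "R ((f ^^ idx (f x)) (rep x)) (f x)" using idx_R[of "f x"] unfolding rep .
    moreover have "R ((f ^^ Suc (idx x)) (rep x)) (f x)" using R_f[OF idx_R[of x]] by simp
    ultimately have "idx (f x) mod period (rep x) = Suc (idx x) mod period (rep x)"
      using mod_period_eq_if_R R_sym R_trans by blast
    then show "idx (f x) = Suc (idx x) mod period (rep x)"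
      using idx_less[of "f x"] unfolding rep by simp
  qed
  from idx_R idx_less R_coords f_coords show ?thesis by (rule that)
qed

lemma conjugacy_from_shadowed_class_orbits:
  assumes "\<And>r. \<exists>p. (f ^^ period r) p = p \<and> (\<forall>i<period r. dist ((f ^^ i) r) ((f ^^ i) p) \<le> c)"
  obtains h where "\<And>x y. R x y \<Longrightarrow> h x = h y" "\<And>x. h (f x) = f (h x)"
    "\<And>x. dist (h x) x < c + eta"
proof -
  obtain rep idx where coords: "\<And>x. R ((f ^^ idx x) (rep x)) x" "\<And>x. idx x < period (rep x)"
    "\<And>x y. R x y \<Longrightarrow> rep x = rep y \<and> idx x = idx y"
    "\<And>x. rep (f x) = rep x \<and> idx (f x) = Suc (idx x) mod period (rep x)"
    by (rule orbit_coordinates) blast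
  obtain pt where pt: "\<And>r. (f ^^ period r) (pt r) = pt r"
    "\<And>r i. i < period r \<Longrightarrow> dist ((f ^^ i) r) ((f ^^ i) (pt r)) \<le> c"
    using assms by metis
  \<comment> \<open>\<open>x\<close> goes to the point of the periodic orbit attached to its orbit of classes
    that sits at the position of \<open>x\<close>\<close>
  define h where "h x = (f ^^ idx x) (pt (rep x))" for x
  have "h x = h y" if "R x y" for x y
    unfolding h_def using coords(3)[OF that] by simp
  moreover have "h (f x) = f (h x)" for x
  proof -
    have "h (f x) = (f ^^ (Suc (idx x) mod period (rep x))) (pt (rep x))"
      unfolding h_def using coords(4) by simp
    also have "\<dots> = (f ^^ Suc (idx x)) (pt (rep x))"
      by (rule funpow_mod_eq[OF pt(1)])
    finally show ?thesis unfolding h_def by simp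
  qed
  moreover have "dist (h x) x < c + eta" for x
  proof -
    have "dist ((f ^^ idx x) (rep x)) (h x) \<le> c"
      unfolding h_def using pt(2) coords(2) by blast
    moreover have "dist ((f ^^ idx x) (rep x)) x < eta"
      using dist_less_if_R coords(1) by blast
    ultimately show ?thesis
      using dist_triangle3[of "h x" x "(f ^^ idx x) (rep x)"] by linarith
  qed
  ultimately show ?thesis using that by blast
qed

lemma class_orbit_shadowed:
  assumes shadow: "\<And>xs m. 1 \<le> m \<Longrightarrow> (\<forall>i<m. dist (f (xs i)) (xs (Suc i)) \<le> eta) \<Longrightarrow> xs 0 = xs m
      \<Longrightarrow> \<exists>p. (f ^^ m) p = p \<and> (\<forall>i\<le>m. dist (xs i) ((f ^^ i) p) \<le> c)"
  shows "\<exists>p. (f ^^ period r) p = p \<and> (\<forall>i<period r. dist ((f ^^ i) r) ((f ^^ i) p) \<le> c)"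
proof -
  define n where "n = period r"
  \<comment> \<open>the orbit of \<open>r\<close> until it returns to the class of \<open>r\<close>, closed up by one jump back to \<open>r\<close>\<close>
  define xs where "xs i = (if i < n then (f ^^ i) r else r)" for i
  have "1 \<le> n" using period_pos unfolding n_def by (simp add: Suc_le_eq)
  have "dist (f (xs i)) (xs (Suc i)) \<le> eta" if "i < n" for i
  proof (cases "Suc i < n")
    case True
    then show ?thesis unfolding xs_def using that eta_pos by simp
  next
    case False
    with that have "n = Suc i" by simp
    then have "f (xs i) = (f ^^ n) r" "xs (Suc i) = r" unfolding xs_def by auto
    then show ?thesis using dist_less_if_R[OF R_funpow_period[of r]] unfolding n_def by simp
  qed
  moreover have "xs 0 = xs n" using \<open>1 \<le> n\<close> unfolding xs_def by simp
  ultimately obtain p where p: "(f ^^ n) p = p" "\<forall>i\<le>n. dist (xs i) ((f ^^ i) p) \<le> c"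
    using shadow[OF \<open>1 \<le> n\<close>] by blast
  have "dist ((f ^^ i) r) ((f ^^ i) p) \<le> c" if "i < n" for i
    using p(2)[rule_format, of i] that by (simp add: xs_def)
  with p(1) show ?thesis unfolding n_def by blast
qed

lemma funpow_preserves_class:
  assumes "R ((f ^^ n) x) x" and "R y x"
  shows "R ((f ^^ n) y) x" and "R ((f' ^^ n) y) x"
proof -
  show "R ((f ^^ n) y) x" using R_funpow[OF assms(2)] assms(1) R_trans by blast
  have "R x ((f' ^^ n) x)"
    using R_funpow'[OF assms(1), of n] by (simp add: funpow_inverse_cancel)
  then show "R ((f' ^^ n) y) x" using R_funpow'[OF assms(2)] R_sym R_trans by blast
qed

lemma class_return_homeomorphism:
  assumes "R ((f ^^ n) x) x"
  shows "homeomorphism UNIV UNIV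
    (\<lambda>y. if R y x then (f' ^^ n) y else y) (\<lambda>y. if R y x then (f ^^ n) y else y)"
proof (rule homeomorphismI)
  have "{y. R y x} = {y. R x y}" using R_sym by blast
  then have closed: "closed {y. R y x}" "closed (- {y. R y x})"
    using closed_class open_class by (simp_all add: closed_Compl)
  have "continuous_on UNIV (\<lambda>y. if R y x then \<phi> y else y)" if "continuous_on UNIV \<phi>" for \<phi>
    using continuous_on_cases[OF closed, of \<phi> "\<lambda>y. y" "\<lambda>y. R y x"]
      continuous_on_subset[OF that, of "{y. R y x}"] by (simp add: continuous_on_id')
  then show "continuous_on UNIV (\<lambda>y. if R y x then (f' ^^ n) y else y)"
    "continuous_on UNIV (\<lambda>y. if R y x then (f ^^ n) y else y)"
    using homeo by (simp_all add: continuous_on_funpow homeomorphism_def)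
qed (use funpow_preserves_class[OF assms] in \<open>auto simp: funpow_inverse_cancel\<close>)

lemma Dhom_le_if_R_close:
  assumes "homeomorphism UNIV UNIV g g'" and "\<And>y. R (g y) (f y)" and "\<And>y. R (g' y) (f' y)"
  shows "Dhom f g \<le> eta"
proof -
  have "dC0 f g \<le> eta"
    by (rule dC0_le, rule less_imp_le, rule dist_less_if_R) (use assms(2) R_sym in blast)
  moreover have "dC0 f' g' \<le> eta"
    by (rule dC0_le, rule less_imp_le, rule dist_less_if_R) (use assms(3) R_sym in blast)
  ultimately show ?thesis
    unfolding Dhom_def inv_eq_if_homeomorphism[OF homeo] inv_eq_if_homeomorphism[OF assms(1)]
    by simp
qed

lemma perturbation_closing_class_orbit:
  obtains g where "is_homeo g" "Dhom f g \<le> eta" "(g ^^ period x) x = x"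
    "\<And>i. R ((g ^^ i) x) ((f ^^ i) x)"
proof -
  define n where "n = period x"
  define s where "s = (\<lambda>y. if R y x then (f' ^^ n) y else y)"
  define s' where "s' = (\<lambda>y. if R y x then (f ^^ n) y else y)"
  have R_n: "R ((f ^^ n) x) x" unfolding n_def by (rule R_funpow_period)
  have hom_s: "homeomorphism UNIV UNIV s s'"
    unfolding s_def s'_def by (rule class_return_homeomorphism[OF R_n])
  have R_s: "R (s y) y" for y
  proof (cases "R y x")
    case True
    then have "R (s y) x" using funpow_preserves_class(2)[OF R_n True] by (simp add: s_def)
    then show ?thesis using R_trans R_sym[OF True] by blast
  qed (simp add: s_def R_refl)
  have R_s': "R (s' y) y" for y
  proof (cases "R y x")
    case True
    then have "R (s' y) x" using funpow_preserves_class(1)[OF R_n True] by (simp add: s'_def)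
    then show ?thesis using R_trans R_sym[OF True] by blast
  qed (simp add: s'_def R_refl)
  define g where "g = s \<circ> f"
  have hom_g: "homeomorphism UNIV UNIV g (f' \<circ> s')"
    unfolding g_def using homeomorphism_compose[OF homeo hom_s] .
  have R_g: "R (g y) (f y)" for y unfolding g_def using R_s by simp
  have "Dhom f g \<le> eta"
    using Dhom_le_if_R_close[OF hom_g R_g] R_f'[OF R_s'] by simp
  have orbit_below: "(g ^^ k) x = (f ^^ k) x" if "k < n" for k
    using that
  proof (induction k)
    case (Suc k)
    have "\<not> R ((f ^^ Suc k) x) x"
      using not_R_funpow_below_period[of "Suc k" x] Suc.prems unfolding n_def by simp
    then show ?case using Suc by (simp add: g_def s_def)
  qed simp
  obtain k where "n = Suc k" using period_pos[of x] unfolding n_def by (metis gr0_implies_Suc)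
  then have "(g ^^ n) x = s ((f ^^ n) x)" using orbit_below[of k] by (simp add: g_def)
  also have "\<dots> = x" unfolding s_def using R_n by (simp add: funpow_inverse_cancel)
  finally have "(g ^^ period x) x = x" unfolding n_def .
  moreover have "is_homeo g" unfolding is_homeo_def using hom_g by blast
  ultimately show ?thesis
    using \<open>Dhom f g \<le> eta\<close> R_funpow_if_R_close[OF R_g] by (intro that)
qed

lemma closed_chain_shadowed_by_perturbation:
  assumes chain: "\<And>i. i < m \<Longrightarrow> dist (f (xs i)) (xs (Suc i)) < lam" and "xs m = xs 0"
  obtains g where "is_homeo g" "Dhom f g \<le> eta" "(g ^^ m) (xs 0) = xs 0"
    "\<And>i. i \<le> m \<Longrightarrow> dist (xs i) ((g ^^ i) (xs 0)) < eta"
proof -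
  have chain_R: "R ((f ^^ i) (xs 0)) (xs i)" if "i \<le> m" for i
    using that
  proof (induction i)
    case (Suc i)
    have "R (f ((f ^^ i) (xs 0))) (f (xs i))" using Suc by (intro R_f) simp
    moreover have "R (f (xs i)) (xs (Suc i))" using Suc.prems chain R_if_near by simp
    ultimately show ?case using R_trans by simp
  qed (simp add: R_refl)
  then have "period (xs 0) dvd m" using chain_R[of m] \<open>xs m = xs 0\<close> by (simp add: period_dvd_if_R)
  obtain g where g: "is_homeo g" "Dhom f g \<le> eta" "(g ^^ period (xs 0)) (xs 0) = xs 0"
    "\<And>i. R ((g ^^ i) (xs 0)) ((f ^^ i) (xs 0))"
    by (rule perturbation_closing_class_orbit[where x = "xs 0"]) blast
  have "(g ^^ m) (xs 0) = xs 0"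
    using funpow_mod_eq[OF g(3), of m] \<open>period (xs 0) dvd m\<close> by simp
  moreover have "dist (xs i) ((g ^^ i) (xs 0)) < eta" if "i \<le> m" for i
    using R_trans[OF chain_R[OF that, THEN R_sym] g(4)[of i, THEN R_sym]] by (rule dist_less_if_R)
  ultimately show ?thesis using g(1,2) by (intro that)
qed

end

lemma two_sided_orbit_rel_shift:
  assumes "\<And>x. g' (g x) = x"
    and "\<forall>n. E ((g ^^ n) x) ((g ^^ n) y)" and "\<forall>n. E ((g' ^^ n) x) ((g' ^^ n) y)"
  shows "\<forall>n. E ((g ^^ n) (g x)) ((g ^^ n) (g y))" and "\<forall>n. E ((g' ^^ n) (g x)) ((g' ^^ n) (g y))"
proof -
  show forward: "\<forall>n. E ((g ^^ n) (g x)) ((g ^^ n) (g y))"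
    using assms(2) by (metis funpow_Suc_right comp_apply)
  have "(g' ^^ Suc n) (g z) = (g' ^^ n) z" for n z
    by (simp add: funpow_Suc_right assms(1) del: funpow.simps)
  then show "\<forall>n. E ((g' ^^ n) (g x)) ((g' ^^ n) (g y))"
    using forward[rule_format, of 0] assms(3) by (metis funpow_0 not0_implies_Suc)
qed

lemma equicontinuous_invariant_partition:
  fixes f f' :: "'a::metric_space \<Rightarrow> 'a" and eta :: real
  assumes compact: "compact (UNIV::'a set)"
    and "\<forall>S::'a set. connected S \<longrightarrow> (\<exists>a. S \<subseteq> {a})"
    and homeo: "homeomorphism UNIV UNIV f f'" and "equicontinuous_homeo f" and "eta > 0"
  obtains R lam where "invariant_partition f f' R lam eta"
proof -
  obtain E :: "'a \<Rightarrow> 'a \<Rightarrow> bool" and lam :: real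
    where E: "equivp E" "lam > 0" "\<And>x y. dist x y < lam \<Longrightarrow> E x y"
      "\<And>x y. E x y \<Longrightarrow> dist x y < eta"
    using clopen_partition_with_Lebesgue_number[OF assms(1,2,5)] by metis
  obtain d where "d > 0"
    and d: "\<And>x y. dist x y \<le> d \<Longrightarrow> (SUP i::int. dist (zpow f i x) (zpow f i y)) \<le> lam/2"
    using assms(4) \<open>lam > 0\<close> unfolding equicontinuous_homeo_def by (meson half_gt_zero)
  have f'_f: "f' (f x) = x" and f_f': "f (f' x) = x" for x
    using homeo by (simp_all add: homeomorphism_def)
  define R where "R x y \<longleftrightarrow> (\<forall>n. E ((f ^^ n) x) ((f ^^ n) y)) \<and> (\<forall>n. E ((f' ^^ n) x) ((f' ^^ n) y))"
    for x y
  have "equivp R" unfolding R_def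
    using E(1) by (intro equivpI reflpI sympI transpI) (meson equivp_reflp equivp_symp equivp_transp)+
  moreover have "R (f x) (f y)" if "R x y" for x y
    using two_sided_orbit_rel_shift[of f' f E x y] f'_f that unfolding R_def by blast
  moreover have "R (f' x) (f' y)" if "R x y" for x y
    using two_sided_orbit_rel_shift[of f f' E x y] f_f' that unfolding R_def by blast
  moreover have "R x y" if "dist x y < d" for x y
  proof -
    have "dist (zpow f i x) (zpow f i y) < lam" for i
      using dist_le_SUP_dist[OF compact_imp_bounded[OF compact],
          where F = "\<lambda>i. zpow f i x" and G = "\<lambda>i. zpow f i y" and i = i]
        d[of x y] that \<open>lam > 0\<close> by simp
    then have "E (zpow f i x) (zpow f i y)" for i by (rule E(3))
    moreover have "zpow f (int n) = f ^^ n" and "zpow f (- int n) = f' ^^ n" for n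
      by (simp_all add: zpow_def inv_eq_if_homeomorphism[OF homeo])
    ultimately show ?thesis unfolding R_def by metis
  qed
  moreover have "dist x y < eta" if "R x y" for x y
    using that E(4) unfolding R_def by (metis funpow_0)
  ultimately have "invariant_partition f f' R d eta"
    using homeo compact \<open>d > 0\<close> by unfold_locales blast+
  then show ?thesis by (rule that)
qed

lemma topologically_stable_imp_strict_periodic_shadowing:
  fixes f f' :: "'a::metric_space \<Rightarrow> 'a"
  assumes "compact (UNIV::'a set)" and "\<forall>S::'a set. connected S \<longrightarrow> (\<exists>a. S \<subseteq> {a})"
    and "homeomorphism UNIV UNIV f f'" and "equicontinuous_homeo f"
    and stable: "topologically_stable f"
  shows "strict_periodic_shadowing f"
  unfolding strict_periodic_shadowing_def
proof (intro allI impI)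
  fix e :: real assume "e > 0"
  then have "e/2 > 0" by simp
  then obtain dT where "dT > 0" and stable_e: "\<And>g. is_homeo g \<Longrightarrow> Dhom f g < dT \<Longrightarrow>
      \<exists>h. continuous_on UNIV h \<and> dC0 h id < e/2 \<and> h \<circ> g = f \<circ> h"
    using stable unfolding topologically_stable_def by blast
  define eta where "eta = min (e/2) (dT/2)"
  have "eta > 0" "eta \<le> e/2" "eta < dT" using \<open>e > 0\<close> \<open>dT > 0\<close> by (simp_all add: eta_def)
  then obtain R lam where "invariant_partition f f' R lam eta"
    using equicontinuous_invariant_partition[OF assms(1-4)] by blast
  then interpret invariant_partition f f' R lam eta .
  show "\<exists>d>0. \<forall>xs m. 1 \<le> m \<longrightarrow> (\<forall>i<m. dist (f (xs i)) (xs (Suc i)) \<le> d) \<longrightarrow> xs 0 = xs m \<longrightarrow>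
      (\<exists>p. (f ^^ m) p = p \<and> (\<forall>i\<le>m. dist (xs i) ((f ^^ i) p) \<le> e))"
  proof (intro exI[of _ "lam/2"] conjI allI impI)
    show "lam/2 > 0" using lam_pos by simp
    fix xs :: "nat \<Rightarrow> 'a" and m :: nat
    assume chain: "\<forall>i<m. dist (f (xs i)) (xs (Suc i)) \<le> lam/2" and "xs 0 = xs m"
    have "dist (f (xs i)) (xs (Suc i)) < lam" if "i < m" for i
      using chain that lam_pos by force
    then obtain g where g: "is_homeo g" "Dhom f g \<le> eta" "(g ^^ m) (xs 0) = xs 0"
      "\<And>i. i \<le> m \<Longrightarrow> dist (xs i) ((g ^^ i) (xs 0)) < eta"
      using closed_chain_shadowed_by_perturbation[OF _ \<open>xs 0 = xs m\<close>[symmetric]] by blast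
    have "Dhom f g < dT" using g(2) \<open>eta < dT\<close> by linarith
    then obtain h where h: "dC0 h id < e/2" "h \<circ> g = f \<circ> h"
      using stable_e g(1) by blast
    \<comment> \<open>the semiconjugacy carries the closed \<open>g\<close>-orbit of \<open>xs 0\<close> to a periodic \<open>f\<close>-orbit\<close>
    define p where "p = h (xs 0)"
    have "(f ^^ m) p = h ((g ^^ m) (xs 0))"
      unfolding p_def by (rule funpow_semiconj[OF h(2), symmetric])
    also have "\<dots> = p" using g(3) by (simp add: p_def)
    finally have "(f ^^ m) p = p" .
    moreover have "dist (xs i) ((f ^^ i) p) \<le> e" if "i \<le> m" for i
    proof -
      define y where "y = (g ^^ i) (xs 0)"
      have fp: "(f ^^ i) p = h y" unfolding p_def y_def using funpow_semiconj[OF h(2)] by simp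
      have "dist y (h y) < e/2"
        using dist_le_dC0[OF compact_imp_bounded[OF assms(1)], where F = h and G = id and x = y] h(1)
        by (simp add: dist_commute)
      moreover have "dist (xs i) y < eta" unfolding y_def using g(4)[OF that] .
      ultimately show ?thesis
        unfolding fp using dist_triangle[of "xs i" "h y" y] \<open>eta \<le> e/2\<close> by linarith
    qed
    ultimately show "\<exists>p. (f ^^ m) p = p \<and> (\<forall>i\<le>m. dist (xs i) ((f ^^ i) p) \<le> e)" by blast
  qed
qed

lemma strict_periodic_shadowing_imp_topologically_stable:
  fixes f f' :: "'a::metric_space \<Rightarrow> 'a"
  assumes "compact (UNIV::'a set)" and "\<forall>S::'a set. connected S \<longrightarrow> (\<exists>a. S \<subseteq> {a})"
    and "homeomorphism UNIV UNIV f f'" and "equicontinuous_homeo f"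
    and shadowing: "strict_periodic_shadowing f"
  shows "topologically_stable f"
  unfolding topologically_stable_def
proof (intro allI impI)
  fix e :: real assume "e > 0"
  then have "e/3 > 0" by simp
  then obtain d where "d > 0" and shadow: "\<And>xs m. 1 \<le> m \<Longrightarrow>
      (\<forall>i<m. dist (f (xs i)) (xs (Suc i)) \<le> d) \<Longrightarrow> xs 0 = xs m \<Longrightarrow>
      \<exists>p. (f ^^ m) p = p \<and> (\<forall>i\<le>m. dist (xs i) ((f ^^ i) p) \<le> e/3)"
    using shadowing unfolding strict_periodic_shadowing_def by blast
  define eta where "eta = min (e/3) d"
  have "eta > 0" "eta \<le> e/3" "eta \<le> d" using \<open>e > 0\<close> \<open>d > 0\<close> by (simp_all add: eta_def)
  then obtain R lam where "invariant_partition f f' R lam eta"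
    using equicontinuous_invariant_partition[OF assms(1-4)] by blast
  then interpret invariant_partition f f' R lam eta .
  have shadowed:
    "\<exists>p. (f ^^ period r) p = p \<and> (\<forall>i<period r. dist ((f ^^ i) r) ((f ^^ i) p) \<le> e/3)" for r
  proof (rule class_orbit_shadowed)
    fix xs m assume "1 \<le> m" and chain: "\<forall>i<m. dist (f (xs i)) (xs (Suc i)) \<le> eta" and "xs 0 = xs m"
    have "\<forall>i<m. dist (f (xs i)) (xs (Suc i)) \<le> d" using chain \<open>eta \<le> d\<close> by force
    then show "\<exists>p. (f ^^ m) p = p \<and> (\<forall>i\<le>m. dist (xs i) ((f ^^ i) p) \<le> e/3)"
      by (rule shadow[OF \<open>1 \<le> m\<close> _ \<open>xs 0 = xs m\<close>])
  qed
  obtain h where h: "\<And>x y. R x y \<Longrightarrow> h x = h y" "\<And>x. h (f x) = f (h x)"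
    "\<And>x. dist (h x) x < e/3 + eta"
    using conjugacy_from_shadowed_class_orbits[OF shadowed] by blast
  show "\<exists>d>0. \<forall>g. is_homeo g \<longrightarrow> Dhom f g < d \<longrightarrow>
      (\<exists>h. continuous_on UNIV h \<and> dC0 h id < e \<and> h \<circ> g = f \<circ> h)"
  proof (intro exI[of _ lam] conjI allI impI)
    show "lam > 0" by (rule lam_pos)
    fix g assume "Dhom f g < lam"
    have R_fg: "R (f x) (g x)" for x
      using dist_le_dC0[OF compact_imp_bounded[OF assms(1)], where F = f and G = g and x = x] \<open>Dhom f g < lam\<close>
      unfolding Dhom_def by (intro R_if_near) simp
    have "h (g x) = f (h x)" for x using h(1)[OF R_fg[of x]] h(2)[of x] by simp
    then have "h \<circ> g = f \<circ> h" by auto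
    moreover have "continuous_on UNIV h" using h(1) by (rule continuous_on_if_R_invariant)
    moreover have "dC0 h id \<le> e/3 + eta" using h(3) by (intro dC0_le) (simp add: less_imp_le)
    then have "dC0 h id < e" using \<open>e > 0\<close> \<open>eta \<le> e/3\<close> by linarith
    ultimately show "\<exists>h. continuous_on UNIV h \<and> dC0 h id < e \<and> h \<circ> g = f \<circ> h" by blast
  qed
qed

theorem corollary1p2:
  fixes f :: "'a::metric_space \<Rightarrow> 'a"
  assumes "cantor_space TYPE('a)"
    and "is_homeo f"
    and "equicontinuous_homeo f"
  shows "topologically_stable f \<longleftrightarrow> strict_periodic_shadowing f"
proof -
  have compact: "compact (UNIV::'a set)"
    and totally_disconnected: "\<forall>S::'a set. connected S \<longrightarrow> (\<exists>a. S \<subseteq> {a})"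
    using assms(1) unfolding cantor_space_def by auto
  obtain f' where homeo: "homeomorphism UNIV UNIV f f'"
    using assms(2) unfolding is_homeo_def by blast
  show ?thesis
    using topologically_stable_imp_strict_periodic_shadowing[OF compact totally_disconnected homeo assms(3)]
      strict_periodic_shadowing_imp_topologically_stable[OF compact totally_disconnected homeo assms(3)]
    by blast
qed

end
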